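(* Let $T$ and $T'$ be Morita context rings. If the Morita context with which $T$ is associated, or the one with which $T'$ is associated, is strict, then $\mathrm{Iso}_0(T,T')\subseteq\mathrm{Iso}_g(T,T')$. More precisely, every element of $\mathrm{Iso}_0^0(T,T')$ is graded and every element of $\mathrm{Iso}_0^1(T,T')$ is anti-graded.
   Context: All rings have an identity $1\neq 0$. A Morita context $(R,S,M,N,f,g)$: rings $R,S$, an $R$-$S$-bimodule $M$, an $S$-$R$-bimodule $N$, bimodule morphisms $f:M\otimes_SN\to R$, $g:N\otimes_RM\to S$, with $[m,n]=f(m\otimes n)$, $(n,m)=g(n\otimes m)$ satisfying $[m,n]m'=m(n,m')$ and $n[m,n']=(n,m)n'$. The context is strict if $f$ and $g$ are surjective. Its Morita context ring $T=\left[\begin{smallmatrix} R & M\\ N & S\end{smallmatrix}\right]$ consists of formal matrices with entrywise addition and product $\left[\begin{smallmatrix} r & m\\ n & s\end{smallmatrix}\right]\left[\begin{smallmatrix} r' & m'\\ n' & s'\end{smallmatrix}\right]=\left[\begin{smallmatrix} rr'+[m,n'] & rm'+ms'\\ nr'+sn' & (n,m')+ss'\end{smallmatrix}\right]$; $T'=\left[\begin{smallmatrix} R' & M'\\ N' & S'\end{smallmatrix}\right]$ similarly. $T$ is $\mathbb Z$-graded with $T_{-1}=\left[\begin{smallmatrix} 0 & 0\\ N & 0\end{smallmatrix}\right]$, $T_0=\left[\begin{smallmatrix} R & 0\\ 0 & S\end{smallmatrix}\right]$, $T_1=\left[\begin{smallmatrix} 0 & M\\ 0 & 0\end{smallmatrix}\right]$,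 $T_i=0$ otherwise. A ring isomorphism $\phi:T\to T'$ is graded if $\phi(T_i)\subseteq T'_i$ for all $i$, anti-graded if $\phi(T_i)\subseteq T'_{-i}$ for all $i$; $\mathrm{Iso}_g(T,T')$ is the set of all graded and all anti-graded isomorphisms. $\mathrm{Iso}_0(T,T')=\mathrm{Iso}_0^0(T,T')\cup\mathrm{Iso}_0^1(T,T')$, where $\mathrm{Iso}_0^0(T,T')$ is the set of maps $\phi\left(\left[\begin{smallmatrix} r & m\\ n & s\end{smallmatrix}\right]\right)=\left[\begin{smallmatrix}\gamma(r) & \gamma(r)m'_0-m'_0\delta(s)+u(m)\\ n'_0\gamma(r)-\delta(s)n'_0+v(n) & \delta(s)\end{smallmatrix}\right]$ with $\gamma:R\to R'$, $\delta:S\to S'$ ring isomorphisms, $u:M\to M'$, $v:N\to N'$ additive bijections with $u(rms)=\gamma(r)u(m)\delta(s)$, $v(snr)=\delta(s)v(n)\gamma(r)$, and $m'_0\in M'$, $n'_0\in N'$ with $[m'_0,N']=0$, $(N',m'_0)=0$, $[M',n'_0]=0$, $(n'_0,M')=0$, $[u(m),v(n)]=\gamma([m,n])$, $(v(n),u(m))=\delta((n,m))$; and $\mathrm{Iso}_0^1(T,T')$ is the set of maps $\psi\left(\left[\begin{smallmatrix} r & m\\ n & s\end{smallmatrix}\right]\right)=\left[\begin{smallmatrix}\sigma(s) & m'_*\rho(r)-\sigma(s)m'_*+\nu(n)\\ \rho(r)n'_*-n'_*\sigma(s)+\mu(m) & \rho(r)\end{smallmatrix}\right]$ with $\rho:R\to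 S'$, $\sigma:S\to R'$ ring isomorphisms, $\mu:M\to N'$, $\nu:N\to M'$ additive bijections with $\mu(rms)=\rho(r)\mu(m)\sigma(s)$, $\nu(snr)=\sigma(s)\nu(n)\rho(r)$, and $m'_*\in M'$, $n'_*\in N'$ with $[m'_*,N']=0$, $(N',m'_* )=0$, $[M',n'_*]=0$, $(n'_*,M')=0$, $(\mu(m),\nu(n))=\rho([m,n])$, $[\nu(n),\mu(m)]=\sigma((n,m))$. *)

theory Defs
  imports Main
begin

text \<open>The rings R, S are types of class ring_1
(rings with 1 \<noteq> 0); M, N are abelian groups with explicit actions.
  lmM: left R-action on M, rmM: right S-action on M,
  lmN: left S-action on N, rmN: right R-action on N,
  pf m n = [m,n] in R,  pg n m = (n,m) in S.\<close>

record ('r, 'm, 'n, 's) morita =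
  lmM :: "'r \<Rightarrow> 'm \<Rightarrow> 'm"
  rmM :: "'m \<Rightarrow> 's \<Rightarrow> 'm"
  lmN :: "'s \<Rightarrow> 'n \<Rightarrow> 'n"
  rmN :: "'n \<Rightarrow> 'r \<Rightarrow> 'n"
  pf  :: "'m \<Rightarrow> 'n \<Rightarrow> 'r"
  pg  :: "'n \<Rightarrow> 'm \<Rightarrow> 's"

definition morita_context ::
  "('r::ring_1, 'm::ab_group_add, 'n::ab_group_add, 's::ring_1) morita \<Rightarrow> bool" where
  "morita_context C \<longleftrightarrow>
     \<comment> \<open>M is an R-S-bimodule\<close>
     (\<forall>r m m'. lmM C r (m + m') = lmM C r m + lmM C r m') \<and>
     (\<forall>r r' m. lmM C (r + r') m = lmM C r m + lmM C r' m) \<and>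
     (\<forall>r r' m. lmM C (r * r') m = lmM C r (lmM C r' m)) \<and>
     (\<forall>m. lmM C 1 m = m) \<and>
     (\<forall>m m' s. rmM C (m + m') s = rmM C m s + rmM C m' s) \<and>
     (\<forall>m s s'. rmM C m (s + s') = rmM C m s + rmM C m s') \<and>
     (\<forall>m s s'. rmM C m (s * s') = rmM C (rmM C m s) s') \<and>
     (\<forall>m. rmM C m 1 = m) \<and>
     (\<forall>r m s. rmM C (lmM C r m) s = lmM C r (rmM C m s)) \<and>
     \<comment> \<open>N is an S-R-bimodule\<close>
     (\<forall>s n n'. lmN C s (n + n') = lmN C s n + lmN C s n') \<and>
     (\<forall>s s' n. lmN C (s + s') n = lmN C s n + lmN C s' n) \<and>
     (\<forall>s s' n. lmN C (s * s') n = lmN C s (lmN C s' n)) \<and>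
     (\<forall>n. lmN C 1 n = n) \<and>
     (\<forall>n n' r. rmN C (n + n') r = rmN C n r + rmN C n' r) \<and>
     (\<forall>n r r'. rmN C n (r + r') = rmN C n r + rmN C n r') \<and>
     (\<forall>n r r'. rmN C n (r * r') = rmN C (rmN C n r) r') \<and>
     (\<forall>n. rmN C n 1 = n) \<and>
     (\<forall>s n r. rmN C (lmN C s n) r = lmN C s (rmN C n r)) \<and>
     \<comment> \<open>f : M \<otimes>_S N \<rightarrow> R is an R-R-bimodule map\<close>
     (\<forall>m m' n. pf C (m + m') n = pf C m n + pf C m' n) \<and>
     (\<forall>m n n'. pf C m (n + n') = pf C m n + pf C m n') \<and>
     (\<forall>m s n. pf C (rmM C m s) n = pf C m (lmN C s n)) \<and>
     (\<forall>r m n. pf C (lmM C r m) n = r * pf C m n) \<and>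
     (\<forall>m n r. pf C m (rmN C n r) = pf C m n * r) \<and>
     \<comment> \<open>g : N \<otimes>_R M \<rightarrow> S is an S-S-bimodule map\<close>
     (\<forall>n n' m. pg C (n + n') m = pg C n m + pg C n' m) \<and>
     (\<forall>n m m'. pg C n (m + m') = pg C n m + pg C n m') \<and>
     (\<forall>n r m. pg C (rmN C n r) m = pg C n (lmM C r m)) \<and>
     (\<forall>s n m. pg C (lmN C s n) m = s * pg C n m) \<and>
     (\<forall>n m s. pg C n (rmM C m s) = pg C n m * s) \<and>
     \<comment> \<open>associativity conditions\<close>
     (\<forall>m n m'. lmM C (pf C m n) m' = rmM C m (pg C n m')) \<and>
     (\<forall>n m n'. rmN C n (pf C m n') = lmN C (pg C n m) n')"

text \<open>Strictness: f and g are surjective, i.e. R (resp. S) is additively generated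
by the elements [m,n] (resp. (n,m)).\<close>
definition strict ::
  "('r::ring_1, 'm::ab_group_add, 'n::ab_group_add, 's::ring_1) morita \<Rightarrow> bool" where
  "strict C \<longleftrightarrow>
     (\<forall>r. \<exists>xs. r = sum_list (map (\<lambda>(m, n). pf C m n) xs)) \<and>
     (\<forall>s. \<exists>xs. s = sum_list (map (\<lambda>(n, m). pg C n m) xs))"

text \<open>Elements of the Morita context ring T, written as (r, m, n, s) for
the matrix [[r, m], [n, s]].\<close>
definition tadd ::
  "('r::ring_1 \<times> 'm::ab_group_add \<times> 'n::ab_group_add \<times> 's::ring_1) \<Rightarrow> ('r \<times> 'm \<times> 'n \<times> 's) \<Rightarrow> ('r \<times> 'm \<times> 'n \<times> 's)" where
  "tadd x y = (case x of (r, m, n, s) \<Rightarrow> case y of (r', m', n', s') \<Rightarrow>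
      (r + r', m + m', n + n', s + s'))"

definition tmul ::
  "('r::ring_1, 'm::ab_group_add, 'n::ab_group_add, 's::ring_1) morita \<Rightarrow>
   ('r \<times> 'm \<times> 'n \<times> 's) \<Rightarrow> ('r \<times> 'm \<times> 'n \<times> 's) \<Rightarrow> ('r \<times> 'm \<times> 'n \<times> 's)" where
  "tmul C x y = (case x of (r, m, n, s) \<Rightarrow> case y of (r', m', n', s') \<Rightarrow>
      (r * r' + pf C m n', lmM C r m' + rmM C m s',
       rmN C n r' + lmN C s n', pg C n m' + s * s'))"

definition tone :: "('r::ring_1 \<times> 'm::ab_group_add \<times> 'n::ab_group_add \<times> 's::ring_1)" where
  "tone = (1, 0, 0, 1)"

definition ring_iso_T ::
  "('r::ring_1, 'm::ab_group_add, 'n::ab_group_add, 's::ring_1) morita \<Rightarrow>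
   ('r2::ring_1, 'm2::ab_group_add, 'n2::ab_group_add, 's2::ring_1) morita \<Rightarrow>
   ('r \<times> 'm \<times> 'n \<times> 's \<Rightarrow> 'r2 \<times> 'm2 \<times> 'n2 \<times> 's2) \<Rightarrow> bool" where
  "ring_iso_T C C' \<phi> \<longleftrightarrow> bij \<phi> \<and>
     (\<forall>x y. \<phi> (tadd x y) = tadd (\<phi> x) (\<phi> y)) \<and>
     (\<forall>x y. \<phi> (tmul C x y) = tmul C' (\<phi> x) (\<phi> y)) \<and>
     \<phi> tone = tone"

definition in_T0 :: "('r::zero \<times> 'm::zero \<times> 'n::zero \<times> 's::zero) \<Rightarrow> bool" where
  "in_T0 x = (case x of (r, m, n, s) \<Rightarrow> m = 0 \<and> n = 0)"

definition in_T1 :: "('r::zero \<times> 'm::zero \<times> 'n::zero \<times> 's::zero) \<Rightarrow> bool" where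
  "in_T1 x = (case x of (r, m, n, s) \<Rightarrow> r = 0 \<and> n = 0 \<and> s = 0)"

definition in_Tm1 :: "('r::zero \<times> 'm::zero \<times> 'n::zero \<times> 's::zero) \<Rightarrow> bool" where
  "in_Tm1 x = (case x of (r, m, n, s) \<Rightarrow> r = 0 \<and> m = 0 \<and> s = 0)"

text \<open>T_i = 0 for other i, and any ring map sends 0 to 0, so only i \<in> {-1,0,1} matter.\<close>
definition graded_map ::
  "('r::zero \<times> 'm::zero \<times> 'n::zero \<times> 's::zero \<Rightarrow> 'r2::zero \<times> 'm2::zero \<times> 'n2::zero \<times> 's2::zero) \<Rightarrow> bool" where
  "graded_map \<phi> \<longleftrightarrow> (\<forall>x. in_T0 x \<longrightarrow> in_T0 (\<phi> x)) \<and>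
     (\<forall>x. in_T1 x \<longrightarrow> in_T1 (\<phi> x)) \<and> (\<forall>x. in_Tm1 x \<longrightarrow> in_Tm1 (\<phi> x)) \<and> \<phi> (0,0,0,0) = (0,0,0,0)"

definition antigraded_map ::
  "('r::zero \<times> 'm::zero \<times> 'n::zero \<times> 's::zero \<Rightarrow> 'r2::zero \<times> 'm2::zero \<times> 'n2::zero \<times> 's2::zero) \<Rightarrow> bool" where
  "antigraded_map \<phi> \<longleftrightarrow> (\<forall>x. in_T0 x \<longrightarrow> in_T0 (\<phi> x)) \<and>
     (\<forall>x. in_T1 x \<longrightarrow> in_Tm1 (\<phi> x)) \<and> (\<forall>x. in_Tm1 x \<longrightarrow> in_T1 (\<phi> x)) \<and> \<phi> (0,0,0,0) = (0,0,0,0)"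

definition Iso_g ::
  "('r::ring_1, 'm::ab_group_add, 'n::ab_group_add, 's::ring_1) morita \<Rightarrow>
   ('r2::ring_1, 'm2::ab_group_add, 'n2::ab_group_add, 's2::ring_1) morita \<Rightarrow>
   ('r \<times> 'm \<times> 'n \<times> 's \<Rightarrow> 'r2 \<times> 'm2 \<times> 'n2 \<times> 's2) set" where
  "Iso_g C C' = {\<phi>. ring_iso_T C C' \<phi> \<and> (graded_map \<phi> \<or> antigraded_map \<phi>)}"

definition ring_iso_map :: "('a::ring_1 \<Rightarrow> 'b::ring_1) \<Rightarrow> bool" where
  "ring_iso_map h \<longleftrightarrow> bij h \<and> (\<forall>a b. h (a + b) = h a + h b) \<and>
     (\<forall>a b. h (a * b) = h a * h b) \<and> h 1 = 1"

definition additive_bij :: "('a::ab_group_add \<Rightarrow> 'b::ab_group_add) \<Rightarrow> bool" where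
  "additive_bij h \<longleftrightarrow> bij h \<and> (\<forall>a b. h (a + b) = h a + h b)"

definition Iso00 ::
  "('r::ring_1, 'm::ab_group_add, 'n::ab_group_add, 's::ring_1) morita \<Rightarrow>
   ('r2::ring_1, 'm2::ab_group_add, 'n2::ab_group_add, 's2::ring_1) morita \<Rightarrow>
   ('r \<times> 'm \<times> 'n \<times> 's \<Rightarrow> 'r2 \<times> 'm2 \<times> 'n2 \<times> 's2) set" where
  "Iso00 C C' = {\<phi>. \<exists>(\<gamma> :: 'r \<Rightarrow> 'r2) (\<delta> :: 's \<Rightarrow> 's2) (u :: 'm \<Rightarrow> 'm2) (v :: 'n \<Rightarrow> 'n2) m0 n0.
     ring_iso_map \<gamma> \<and> ring_iso_map \<delta> \<and> additive_bij u \<and> additive_bij v \<and>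
     (\<forall>r m s. u (rmM C (lmM C r m) s) = rmM C' (lmM C' (\<gamma> r) (u m)) (\<delta> s)) \<and>
     (\<forall>s n r. v (rmN C (lmN C s n) r) = rmN C' (lmN C' (\<delta> s) (v n)) (\<gamma> r)) \<and>
     (\<forall>n'. pf C' m0 n' = 0) \<and> (\<forall>n'. pg C' n' m0 = 0) \<and>
     (\<forall>m'. pf C' m' n0 = 0) \<and> (\<forall>m'. pg C' n0 m' = 0) \<and>
     (\<forall>m n. pf C' (u m) (v n) = \<gamma> (pf C m n)) \<and>
     (\<forall>m n. pg C' (v n) (u m) = \<delta> (pg C n m)) \<and>
     \<phi> = (\<lambda>(r, m, n, s). (\<gamma> r,
                          lmM C' (\<gamma> r) m0 - rmM C' m0 (\<delta> s) + u m,
                          rmN C' n0 (\<gamma> r) - lmN C' (\<delta> s) n0 + v n,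
                          \<delta> s))}"

definition Iso01 ::
  "('r::ring_1, 'm::ab_group_add, 'n::ab_group_add, 's::ring_1) morita \<Rightarrow>
   ('r2::ring_1, 'm2::ab_group_add, 'n2::ab_group_add, 's2::ring_1) morita \<Rightarrow>
   ('r \<times> 'm \<times> 'n \<times> 's \<Rightarrow> 'r2 \<times> 'm2 \<times> 'n2 \<times> 's2) set" where
  "Iso01 C C' = {\<psi>. \<exists>(\<rho> :: 'r \<Rightarrow> 's2) (\<sigma> :: 's \<Rightarrow> 'r2) (\<mu> :: 'm \<Rightarrow> 'n2) (\<nu> :: 'n \<Rightarrow> 'm2) ms ns.
     ring_iso_map \<rho> \<and> ring_iso_map \<sigma> \<and> additive_bij \<mu> \<and> additive_bij \<nu> \<and>
     (\<forall>r m s. \<mu> (rmM C (lmM C r m) s) = rmN C' (lmN C' (\<rho> r) (\<mu> m)) (\<sigma> s)) \<and>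
     (\<forall>s n r. \<nu> (rmN C (lmN C s n) r) = rmM C' (lmM C' (\<sigma> s) (\<nu> n)) (\<rho> r)) \<and>
     (\<forall>n'. pf C' ms n' = 0) \<and> (\<forall>n'. pg C' n' ms = 0) \<and>
     (\<forall>m'. pf C' m' ns = 0) \<and> (\<forall>m'. pg C' ns m' = 0) \<and>
     (\<forall>m n. pg C' (\<mu> m) (\<nu> n) = \<rho> (pf C m n)) \<and>
     (\<forall>m n. pf C' (\<nu> n) (\<mu> m) = \<sigma> (pg C n m)) \<and>
     \<psi> = (\<lambda>(r, m, n, s). (\<sigma> s,
                          rmM C' ms (\<rho> r) - lmM C' (\<sigma> s) ms + \<nu> n,
                          lmN C' (\<rho> r) ns - rmN C' ns (\<sigma> s) + \<mu> m,
                          \<rho> r))}"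

end

theory Submission
  imports Defs
begin

(* The key observation is that in both cases 1 \<in> R' is a finite sum of elements
   [m',n']: directly if C' is strict, and by transporting 1 = \<Sum>[m_i,n_i] (resp.
   1 = \<Sum>(n_i,m_i)) along gamma (resp. sigma) if C is strict.  Once 1 lies in this
   trace, an element m0 of M' with (N',m0) = 0 vanishes, since
   m0 = 1 m0 = \<Sum> [m_i,n_i] m0 = \<Sum> m_i (n_i,m0) = 0, and dually for n0 \<in> N'.
   Hence the correction terms m'_0, n'_0 (resp. m'_*, n'_* ) are zero, and the maps
   reduce to the diagonal map (r,m,n,s) |-> (gamma r, u m, v n, delta s), resp.
   the anti-diagonal map (r,m,n,s) |-> (sigma s, nu n, mu m, rho r). *)

lemma additive_zero:
  fixes h :: "'a::ab_group_add \<Rightarrow> 'b::ab_group_add"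
  assumes "\<forall>a b. h (a + b) = h a + h b"
  shows "h 0 = 0"
  using assms by (metis add_0 add_cancel_right_right)

lemma additive_sum_list:
  fixes h :: "'a::ab_group_add \<Rightarrow> 'b::ab_group_add"
  assumes "\<forall>a b. h (a + b) = h a + h b"
  shows "h (sum_list (map g xs)) = sum_list (map (\<lambda>x. h (g x)) xs)"
  using additive_zero[OF assms] assms by (induction xs) auto

lemma morita_context_zero:
  assumes "morita_context C"
  shows "lmM C r 0 = 0" "rmM C 0 s = 0" "rmN C 0 r = 0" "lmN C s 0 = 0"
    "rmM C m 0 = 0" "lmN C 0 n = 0"
  using assms unfolding morita_context_def by (metis add_cancel_right_right)+

section \<open>Contexts whose trace contains the identity\<close>

text \<open>A ring-valued pairing \<open>p\<close> spans the unit if 1 is a finite sum of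
  elements \<open>p a b\<close>; for \<open>p = [-,-]\<close> this says that the trace ideal of the context is
  the whole ring.\<close>
definition unit_spanned :: "('a \<Rightarrow> 'b \<Rightarrow> 'r::ring_1) \<Rightarrow> bool" where
  "unit_spanned p \<longleftrightarrow> (\<exists>xs. 1 = sum_list (map (\<lambda>(a, b). p a b) xs))"

lemma strict_unit_spanned:
  assumes "strict C"
  shows "unit_spanned (pf C)" "unit_spanned (pg C)"
  using assms unfolding strict_def unit_spanned_def by blast+

text \<open>Unit-spannedness is carried along a unital additive map \<open>h\<close> that
  intertwines two pairings; this transports strictness of \<open>C\<close> to \<open>C'\<close>.\<close>
lemma unit_spanned_transfer:
  fixes h :: "'r::ring_1 \<Rightarrow> 'r2::ring_1"
  assumes spanned: "unit_spanned p"
    and add: "\<forall>a b. h (a + b) = h a + h b" and unital: "h 1 = 1"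
    and intertwine: "\<forall>a b. q (f a) (g b) = h (p a b)"
  shows "unit_spanned q"
proof -
  obtain xs where xs: "1 = sum_list (map (\<lambda>(a, b). p a b) xs)"
    using spanned unfolding unit_spanned_def by blast
  have "1 = h (sum_list (map (\<lambda>(a, b). p a b) xs))"
    using unital xs by simp
  also have "\<dots> = sum_list (map (\<lambda>x. h (case x of (a, b) \<Rightarrow> p a b)) xs)"
    by (rule additive_sum_list[OF add])
  also have "\<dots> = sum_list (map (\<lambda>(a, b). q a b) (map (\<lambda>(a, b). (f a, g b)) xs))"
    by (simp add: o_def case_prod_beta intertwine)
  finally show ?thesis
    unfolding unit_spanned_def by blast
qed

text \<open>If 1 = \<open>\<Sum>[m_i,n_i]\<close>, then \<open>(N,m0) = 0\<close> forces \<open>m0 = 0\<close>: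
  \<open>m0 = \<Sum>[m_i,n_i] m0 = \<Sum> m_i (n_i,m0) = 0\<close>.\<close>
lemma unit_spanned_annihilates_M:
  assumes mc: "morita_context C"
    and spanned: "unit_spanned (pf C)"
    and ann: "\<forall>n. pg C n m0 = 0"
  shows "m0 = 0"
proof -
  obtain xs where one: "1 = sum_list (map (\<lambda>(m, n). pf C m n) xs)"
    using spanned unfolding unit_spanned_def by blast
  have add: "\<forall>a b. lmM C (a + b) m0 = lmM C a m0 + lmM C b m0"
    using mc unfolding morita_context_def by auto
  have term_zero: "lmM C (pf C m n) m0 = 0" for m n
  proof -
    have "lmM C (pf C m n) m0 = rmM C m (pg C n m0)"
      using mc unfolding morita_context_def by blast
    then show ?thesis
      using ann morita_context_zero(5)[OF mc] by simp
  qed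
  have "m0 = lmM C 1 m0"
    using mc unfolding morita_context_def by simp
  also have "\<dots> = sum_list (map (\<lambda>x. lmM C (case x of (m, n) \<Rightarrow> pf C m n) m0) xs)"
    unfolding one by (rule additive_sum_list[OF add])
  also have "\<dots> = 0"
    by (simp add: case_prod_beta term_zero)
  finally show ?thesis .
qed

text \<open>Dually, \<open>(n0,M) = 0\<close> forces \<open>n0 = 0\<close>:
  \<open>n0 = n0 \<Sum>[m_i,n_i] = \<Sum> (n0,m_i) n_i = 0\<close>.\<close>
lemma unit_spanned_annihilates_N:
  assumes mc: "morita_context C"
    and spanned: "unit_spanned (pf C)"
    and ann: "\<forall>m. pg C n0 m = 0"
  shows "n0 = 0"
proof -
  obtain xs where one: "1 = sum_list (map (\<lambda>(m, n). pf C m n) xs)"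
    using spanned unfolding unit_spanned_def by blast
  have add: "\<forall>a b. rmN C n0 (a + b) = rmN C n0 a + rmN C n0 b"
    using mc unfolding morita_context_def by auto
  have term_zero: "rmN C n0 (pf C m n) = 0" for m n
  proof -
    have "rmN C n0 (pf C m n) = lmN C (pg C n0 m) n"
      using mc unfolding morita_context_def by blast
    then show ?thesis
      using ann morita_context_zero(6)[OF mc] by simp
  qed
  have "n0 = rmN C n0 1"
    using mc unfolding morita_context_def by simp
  also have "\<dots> = sum_list (map (\<lambda>x. rmN C n0 (case x of (m, n) \<Rightarrow> pf C m n)) xs)"
    unfolding one by (rule additive_sum_list[OF add])
  also have "\<dots> = 0"
    by (simp add: case_prod_beta term_zero)
  finally show ?thesis .
qed

section \<open>Diagonal and anti-diagonal isomorphisms\<close>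

lemma bij_componentwise:
  assumes "bij a" "bij b" "bij c" "bij d"
  shows "bij (\<lambda>(r, m, n, s). (a r, b m, c n, d s))"
proof -
  have "bij (map_prod a (map_prod b (map_prod c d)))"
    using assms by (metis bij_betw_map_prod UNIV_Times_UNIV)
  moreover have "map_prod a (map_prod b (map_prod c d)) = (\<lambda>(r, m, n, s). (a r, b m, c n, d s))"
    by auto
  ultimately show ?thesis by simp
qed

lemma bij_reversed_componentwise:
  fixes a :: "'r \<Rightarrow> 's2" and b :: "'m \<Rightarrow> 'n2" and c :: "'n \<Rightarrow> 'm2" and d :: "'s \<Rightarrow> 'r2"
  assumes "bij a" "bij b" "bij c" "bij d"
  shows "bij (\<lambda>(r, m, n, s). (d s, c n, b m, a r))"
proof -
  have reverse: "bij (\<lambda>(r::'r, m::'m, n::'n, s::'s). (s, n, m, r))"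
    by (rule o_bij[where g="\<lambda>(s, n, m, r). (r, m, n, s)"]) auto
  have "(\<lambda>(r, m, n, s). (d s, c n, b m, a r)) =
      (\<lambda>(s, n, m, r). (d s, c n, b m, a r)) \<circ> (\<lambda>(r, m, n, s). (s, n, m, r))"
    by auto
  then show ?thesis
    using bij_comp[OF reverse bij_componentwise[OF assms(4,3,2,1)]] by simp
qed

text \<open>The bimodule conditions are stated two-sidedly, as in the definition of
  \<open>Iso_0^0\<close>; the one-sided versions follow by putting 1 on the other side.\<close>
lemma diagonal_graded_iso:
  assumes mcC: "morita_context C" and mcC': "morita_context C'"
    and \<gamma>: "ring_iso_map \<gamma>" and \<delta>: "ring_iso_map \<delta>"
    and u: "additive_bij u" and v: "additive_bij v"
    and u_bimod: "\<forall>r m s. u (rmM C (lmM C r m) s) = rmM C' (lmM C' (\<gamma> r) (u m)) (\<delta> s)"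
    and v_bimod: "\<forall>s n r. v (rmN C (lmN C s n) r) = rmN C' (lmN C' (\<delta> s) (v n)) (\<gamma> r)"
    and pf_compat: "\<forall>m n. pf C' (u m) (v n) = \<gamma> (pf C m n)"
    and pg_compat: "\<forall>m n. pg C' (v n) (u m) = \<delta> (pg C n m)"
  shows "ring_iso_T C C' (\<lambda>(r, m, n, s). (\<gamma> r, u m, v n, \<delta> s)) \<and>
         graded_map (\<lambda>(r, m, n, s). (\<gamma> r, u m, v n, \<delta> s))"
proof -
  have \<gamma>_hom: "\<forall>a b. \<gamma> (a + b) = \<gamma> a + \<gamma> b" "\<forall>a b. \<gamma> (a * b) = \<gamma> a * \<gamma> b" "\<gamma> 1 = 1"
    and \<delta>_hom: "\<forall>a b. \<delta> (a + b) = \<delta> a + \<delta> b" "\<forall>a b. \<delta> (a * b) = \<delta> a * \<delta> b" "\<delta> 1 = 1"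
    using \<gamma> \<delta> unfolding ring_iso_map_def by auto
  have u_add: "\<forall>a b. u (a + b) = u a + u b" and v_add: "\<forall>a b. v (a + b) = v a + v b"
    using u v unfolding additive_bij_def by auto
  have zeros: "\<gamma> 0 = 0" "\<delta> 0 = 0" "u 0 = 0" "v 0 = 0"
    using additive_zero \<gamma>_hom(1) \<delta>_hom(1) u_add v_add by blast+
  have u_left: "u (lmM C r m) = lmM C' (\<gamma> r) (u m)"
    and u_right: "u (rmM C m s) = rmM C' (u m) (\<delta> s)"
    and v_left: "v (lmN C s n) = lmN C' (\<delta> s) (v n)"
    and v_right: "v (rmN C n r) = rmN C' (v n) (\<gamma> r)" for r s m n
    using u_bimod[rule_format, of r m 1] u_bimod[rule_format, of 1 m s]
      v_bimod[rule_format, of s n 1] v_bimod[rule_format, of 1 n r]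
      mcC mcC' \<gamma>_hom(3) \<delta>_hom(3) unfolding morita_context_def by simp_all
  have "bij (\<lambda>(r, m, n, s). (\<gamma> r, u m, v n, \<delta> s))"
    by (rule bij_componentwise) (use \<gamma> \<delta> u v in \<open>auto simp: ring_iso_map_def additive_bij_def\<close>)
  then have "ring_iso_T C C' (\<lambda>(r, m, n, s). (\<gamma> r, u m, v n, \<delta> s))"
    unfolding ring_iso_T_def
    using \<gamma>_hom \<delta>_hom u_add v_add zeros u_left u_right v_left v_right pf_compat pg_compat
    by (auto simp: tadd_def tmul_def tone_def split: prod.splits)
  moreover have "graded_map (\<lambda>(r, m, n, s). (\<gamma> r, u m, v n, \<delta> s))"
    unfolding graded_map_def in_T0_def in_T1_def in_Tm1_def using zeros by auto
  ultimately show ?thesis ..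
qed

lemma antidiagonal_antigraded_iso:
  assumes mcC: "morita_context C" and mcC': "morita_context C'"
    and \<rho>: "ring_iso_map \<rho>" and \<sigma>: "ring_iso_map \<sigma>"
    and \<mu>: "additive_bij \<mu>" and \<nu>: "additive_bij \<nu>"
    and \<mu>_bimod: "\<forall>r m s. \<mu> (rmM C (lmM C r m) s) = rmN C' (lmN C' (\<rho> r) (\<mu> m)) (\<sigma> s)"
    and \<nu>_bimod: "\<forall>s n r. \<nu> (rmN C (lmN C s n) r) = rmM C' (lmM C' (\<sigma> s) (\<nu> n)) (\<rho> r)"
    and pg_compat: "\<forall>m n. pg C' (\<mu> m) (\<nu> n) = \<rho> (pf C m n)"
    and pf_compat: "\<forall>m n. pf C' (\<nu> n) (\<mu> m) = \<sigma> (pg C n m)"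
  shows "ring_iso_T C C' (\<lambda>(r, m, n, s). (\<sigma> s, \<nu> n, \<mu> m, \<rho> r)) \<and>
         antigraded_map (\<lambda>(r, m, n, s). (\<sigma> s, \<nu> n, \<mu> m, \<rho> r))"
proof -
  have \<rho>_hom: "\<forall>a b. \<rho> (a + b) = \<rho> a + \<rho> b" "\<forall>a b. \<rho> (a * b) = \<rho> a * \<rho> b" "\<rho> 1 = 1"
    and \<sigma>_hom: "\<forall>a b. \<sigma> (a + b) = \<sigma> a + \<sigma> b" "\<forall>a b. \<sigma> (a * b) = \<sigma> a * \<sigma> b" "\<sigma> 1 = 1"
    using \<rho> \<sigma> unfolding ring_iso_map_def by auto
  have \<mu>_add: "\<forall>a b. \<mu> (a + b) = \<mu> a + \<mu> b" and \<nu>_add: "\<forall>a b. \<nu> (a + b) = \<nu> a + \<nu> b"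
    using \<mu> \<nu> unfolding additive_bij_def by auto
  have zeros: "\<rho> 0 = 0" "\<sigma> 0 = 0" "\<mu> 0 = 0" "\<nu> 0 = 0"
    using additive_zero \<rho>_hom(1) \<sigma>_hom(1) \<mu>_add \<nu>_add by blast+
  have \<mu>_left: "\<mu> (lmM C r m) = lmN C' (\<rho> r) (\<mu> m)"
    and \<mu>_right: "\<mu> (rmM C m s) = rmN C' (\<mu> m) (\<sigma> s)"
    and \<nu>_left: "\<nu> (lmN C s n) = lmM C' (\<sigma> s) (\<nu> n)"
    and \<nu>_right: "\<nu> (rmN C n r) = rmM C' (\<nu> n) (\<rho> r)" for r s m n
    using \<mu>_bimod[rule_format, of r m 1] \<mu>_bimod[rule_format, of 1 m s]
      \<nu>_bimod[rule_format, of s n 1] \<nu>_bimod[rule_format, of 1 n r]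
      mcC mcC' \<rho>_hom(3) \<sigma>_hom(3) unfolding morita_context_def by simp_all
  have "bij (\<lambda>(r, m, n, s). (\<sigma> s, \<nu> n, \<mu> m, \<rho> r))"
    by (rule bij_reversed_componentwise)
      (use \<rho> \<sigma> \<mu> \<nu> in \<open>auto simp: ring_iso_map_def additive_bij_def\<close>)
  then have "ring_iso_T C C' (\<lambda>(r, m, n, s). (\<sigma> s, \<nu> n, \<mu> m, \<rho> r))"
    unfolding ring_iso_T_def
    using \<rho>_hom \<sigma>_hom \<mu>_add \<nu>_add zeros \<mu>_left \<mu>_right \<nu>_left \<nu>_right pf_compat pg_compat
    by (auto simp: tadd_def tmul_def tone_def add.commute split: prod.splits)
  moreover have "antigraded_map (\<lambda>(r, m, n, s). (\<sigma> s, \<nu> n, \<mu> m, \<rho> r))"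
    unfolding antigraded_map_def in_T0_def in_T1_def in_Tm1_def using zeros by auto
  ultimately show ?thesis ..
qed

lemma Iso00_graded:
  assumes mcC: "morita_context C" and mcC': "morita_context C'"
    and strict: "strict C \<or> strict C'" and \<phi>: "\<phi> \<in> Iso00 C C'"
  shows "ring_iso_T C C' \<phi> \<and> graded_map \<phi>"
proof -
  obtain \<gamma> \<delta> u v m0 n0 where
    \<gamma>: "ring_iso_map \<gamma>" and \<delta>: "ring_iso_map \<delta>" and u: "additive_bij u" and v: "additive_bij v"
    and u_bimod: "\<forall>r m s. u (rmM C (lmM C r m) s) = rmM C' (lmM C' (\<gamma> r) (u m)) (\<delta> s)"
    and v_bimod: "\<forall>s n r. v (rmN C (lmN C s n) r) = rmN C' (lmN C' (\<delta> s) (v n)) (\<gamma> r)"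
    and m0_ann: "\<forall>n'. pg C' n' m0 = 0" and n0_ann: "\<forall>m'. pg C' n0 m' = 0"
    and pf_compat: "\<forall>m n. pf C' (u m) (v n) = \<gamma> (pf C m n)"
    and pg_compat: "\<forall>m n. pg C' (v n) (u m) = \<delta> (pg C n m)"
    and \<phi>_def: "\<phi> = (\<lambda>(r, m, n, s). (\<gamma> r,
                          lmM C' (\<gamma> r) m0 - rmM C' m0 (\<delta> s) + u m,
                          rmN C' n0 (\<gamma> r) - lmN C' (\<delta> s) n0 + v n,
                          \<delta> s))"
    using \<phi> unfolding Iso00_def by blast
  have "unit_spanned (pf C')"
    using strict
  proof
    assume "strict C"
    then show ?thesis
      using unit_spanned_transfer[of "pf C" \<gamma> "pf C'" u v] strict_unit_spanned(1)
        pf_compat \<gamma> unfolding ring_iso_map_def by blast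
  qed (rule strict_unit_spanned(1))
  then have "m0 = 0" and "n0 = 0"
    using unit_spanned_annihilates_M unit_spanned_annihilates_N mcC' m0_ann n0_ann by blast+
  then have "\<phi> = (\<lambda>(r, m, n, s). (\<gamma> r, u m, v n, \<delta> s))"
    unfolding \<phi>_def by (simp add: morita_context_zero[OF mcC'])
  then show ?thesis
    using diagonal_graded_iso[OF mcC mcC' \<gamma> \<delta> u v u_bimod v_bimod pf_compat pg_compat] by simp
qed

text \<open>Likewise \<open>m'_*, n'_*\<close> vanish and every element of \<open>Iso_0^1\<close> is an
  anti-diagonal anti-graded isomorphism; here the unit of \<open>R'\<close> is reached from
  the unit of \<open>S\<close> via \<open>\<sigma>\<close>.\<close>
lemma Iso01_antigraded:
  assumes mcC: "morita_context C" and mcC': "morita_context C'"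
    and strict: "strict C \<or> strict C'" and \<psi>: "\<psi> \<in> Iso01 C C'"
  shows "ring_iso_T C C' \<psi> \<and> antigraded_map \<psi>"
proof -
  obtain \<rho> \<sigma> \<mu> \<nu> ms ns where
    \<rho>: "ring_iso_map \<rho>" and \<sigma>: "ring_iso_map \<sigma>" and \<mu>: "additive_bij \<mu>" and \<nu>: "additive_bij \<nu>"
    and \<mu>_bimod: "\<forall>r m s. \<mu> (rmM C (lmM C r m) s) = rmN C' (lmN C' (\<rho> r) (\<mu> m)) (\<sigma> s)"
    and \<nu>_bimod: "\<forall>s n r. \<nu> (rmN C (lmN C s n) r) = rmM C' (lmM C' (\<sigma> s) (\<nu> n)) (\<rho> r)"
    and ms_ann: "\<forall>n'. pg C' n' ms = 0" and ns_ann: "\<forall>m'. pg C' ns m' = 0"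
    and pg_compat: "\<forall>m n. pg C' (\<mu> m) (\<nu> n) = \<rho> (pf C m n)"
    and pf_compat: "\<forall>m n. pf C' (\<nu> n) (\<mu> m) = \<sigma> (pg C n m)"
    and \<psi>_def: "\<psi> = (\<lambda>(r, m, n, s). (\<sigma> s,
                          rmM C' ms (\<rho> r) - lmM C' (\<sigma> s) ms + \<nu> n,
                          lmN C' (\<rho> r) ns - rmN C' ns (\<sigma> s) + \<mu> m,
                          \<rho> r))"
    using \<psi> unfolding Iso01_def by blast
  have "unit_spanned (pf C')"
    using strict
  proof
    assume "strict C"
    then show ?thesis
      using unit_spanned_transfer[of "pg C" \<sigma> "pf C'" \<nu> \<mu>] strict_unit_spanned(2)
        pf_compat \<sigma> unfolding ring_iso_map_def by blast
  qed (rule strict_unit_spanned(1))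
  then have "ms = 0" and "ns = 0"
    using unit_spanned_annihilates_M unit_spanned_annihilates_N mcC' ms_ann ns_ann by blast+
  then have "\<psi> = (\<lambda>(r, m, n, s). (\<sigma> s, \<nu> n, \<mu> m, \<rho> r))"
    unfolding \<psi>_def by (simp add: morita_context_zero[OF mcC'])
  then show ?thesis
    using antidiagonal_antigraded_iso[OF mcC mcC' \<rho> \<sigma> \<mu> \<nu> \<mu>_bimod \<nu>_bimod pg_compat pf_compat]
    by simp
qed

theorem proposition3p1:
  fixes C :: "('r::ring_1, 'm::ab_group_add, 'n::ab_group_add, 's::ring_1) morita"
    and C' :: "('r2::ring_1, 'm2::ab_group_add, 'n2::ab_group_add, 's2::ring_1) morita"
  assumes "morita_context C" and "morita_context C'"
    and "strict C \<or> strict C'"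
  shows "Iso00 C C' \<union> Iso01 C C' \<subseteq> Iso_g C C' \<and>
         (\<forall>\<phi> \<in> Iso00 C C'. ring_iso_T C C' \<phi> \<and> graded_map \<phi>) \<and>
         (\<forall>\<psi> \<in> Iso01 C C'. ring_iso_T C C' \<psi> \<and> antigraded_map \<psi>)"
proof -
  have graded: "\<forall>\<phi> \<in> Iso00 C C'. ring_iso_T C C' \<phi> \<and> graded_map \<phi>"
    using Iso00_graded[OF assms] by blast
  have antigraded: "\<forall>\<psi> \<in> Iso01 C C'. ring_iso_T C C' \<psi> \<and> antigraded_map \<psi>"
    using Iso01_antigraded[OF assms] by blast
  have "Iso00 C C' \<union> Iso01 C C' \<subseteq> Iso_g C C'"
    using graded antigraded unfolding Iso_g_def by blast
  with graded antigraded show ?thesis by blast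
qed

end
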